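(* Assume the setup below, the continuity condition, and the summability condition $\sup_{i\in\mathbb{Z}^d}\sum_{k\ge 0}|V_i(k)|\,\lambda_i(k)<+\infty$. Then for every site $i\in\mathbb{Z}^d$ and every $k\ge -1$ there exists a family of probability distributions $p_i^{[k]}(\cdot\mid w)$ on $A$, indexed by local configurations $w\in A^{V_i(k)}$ (for $k=-1$ this is a single probability distribution $p_i^{[-1]}(\cdot)$ on $A$), such that for all $a\in A$ and $\eta\in A^{\mathbb{Z}^d}$ $$c_i(a,\eta)=M_i\,p_i(a\mid\eta),\qquad p_i(a\mid\eta)=\sum_{k\ge -1}\lambda_i(k)\,p_i^{[k]}\big(a\mid \eta(V_i(k))\big).$$ Consequently, for every cylinder function $f$, $$Lf(\eta)=\sum_{i\in\mathbb{Z}^d}\sum_{a\in A}\sum_{k\ge -1}M_i\,\lambda_i(k)\,p_i^{[k]}\big(a\mid\eta(V_i(k))\big)\,[f(\eta^{i,a})-f(\eta)],$$ where $L$ is the generator defined below.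
   Context: Setup. Let $A$ be a finite set (colors) and $d\ge1$. Configurations are elements $\eta\in A^{\mathbb{Z}^d}$; for $V\subset\mathbb{Z}^d$, $\eta(V)\in A^V$ is the restriction. For $i\in\mathbb{Z}^d$, $a\in A$, $\eta^{i,a}$ denotes the configuration equal to $\eta$ off $i$ and equal to $a$ at $i$. Let $\|j\|=\sum_{u=1}^d|j_u|$, $V_i(k)=\{j\in\mathbb{Z}^d:\|j-i\|\le k\}$ for $k\ge0$, and $V_i(-1)=\emptyset$. For each $i$, $\eta$ and $a\neq\eta(i)$ a number $c_i(a,\eta)>0$ is given with $c_i(a,\eta)\le\Gamma_i<\infty$. For each $i$ a constant $0<M_i<\infty$ is fixed with $\sum_{a\ne\eta(i)}c_i(a,\eta)\le M_i$ for all $\eta$ (e.g. $M_i=|A|\Gamma_i$), and one sets $c_i(\eta(i),\eta)=M_i-\sum_{a\neq\eta(i)}c_i(a,\eta)$; thus $p_i(a\mid\eta):=c_i(a,\eta)/M_i$ is a probability distribution on $A$ for each $\eta$. Continuity condition: for every $a\in A$, $\sup_{i}\sup\{|c_i(a,\eta)-c_i(a,\zeta)|:\eta(V_i(k))=\zeta(V_i(k))\}\to0$ as $k\to\infty$. Define $$\alpha_i(-1)=\sum_{a\in A}\min\Big(\inf_{\zeta:\zeta(i)\ne a}c_i(a,\zeta),\;M_i-\sup_{\zeta:\zeta(i)=a}\sum_{b\ne a}c_i(b,\zeta)\Big),$$ and for $k\ge0$ $$\alpha_i(k)=\min_{w\in A^{V_i(k)}}\Big(\sum_{a\ne w(i)}\inf_{\zeta:\zeta(V_i(k))=w}c_i(a,\zeta)+M_i-\sup_{\zeta:\zeta(V_i(k))=w}\sum_{b\ne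 w(i)}c_i(b,\zeta)\Big).$$ Set $\lambda_i(-1)=\alpha_i(-1)/M_i$ and $\lambda_i(k)=(\alpha_i(k)-\alpha_i(k-1))/M_i$ for $k\ge0$ (under continuity $\alpha_i(k)\uparrow M_i$, so $(\lambda_i(k))_{k\ge-1}$ is a probability distribution on $\{-1,0,1,\dots\}$). The multicolor system has generator, on cylinder functions $f$, $Lf(\eta)=\sum_{i\in\mathbb{Z}^d}\sum_{a\ne\eta(i)}c_i(a,\eta)[f(\eta^{i,a})-f(\eta)]$. *)

theory Defs
  imports "HOL-Analysis.Analysis" "HOL-Probability.Probability_Mass_Function"
begin

definition norm1 :: "int ^ 'd \<Rightarrow> int" where
  "norm1 j = (\<Sum>u\<in>UNIV. \<bar>j $ u\<bar>)"

definition Vball :: "int ^ 'd \<Rightarrow> int \<Rightarrow> (int ^ 'd) set" where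
  "Vball i k = {j. norm1 (j - i) \<le> k}"   \<comment> \<open>for k = -1 this is the empty set\<close>

definition alpha_neg1 ::
  "(int ^ 'd \<Rightarrow> 'a::finite \<Rightarrow> (int ^ 'd \<Rightarrow> 'a) \<Rightarrow> real) \<Rightarrow> (int ^ 'd \<Rightarrow> real) \<Rightarrow> int ^ 'd \<Rightarrow> real" where
  "alpha_neg1 c M i =
     (\<Sum>a\<in>UNIV.
        (let R = M i - (SUP \<zeta>\<in>{\<zeta>. \<zeta> i = a}. (\<Sum>b\<in>UNIV - {a}. c i b \<zeta>))
         in if (\<exists>\<zeta>. \<zeta> i \<noteq> a) then min (INF \<zeta>\<in>{\<zeta>. \<zeta> i \<noteq> a}. c i a \<zeta>) R else R))"
  \<comment> \<open>convention: the infimum over the empty set is +\<infinity>, so the min is then R\<close>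

definition alpha_pos ::
  "(int ^ 'd \<Rightarrow> 'a::finite \<Rightarrow> (int ^ 'd \<Rightarrow> 'a) \<Rightarrow> real) \<Rightarrow> (int ^ 'd \<Rightarrow> real) \<Rightarrow> int ^ 'd \<Rightarrow> int \<Rightarrow> real" where
  "alpha_pos c M i k =
     Min ((\<lambda>w. (\<Sum>a\<in>UNIV - {w i}. (INF \<zeta>\<in>{\<zeta>. \<forall>j\<in>Vball i k. \<zeta> j = w j}. c i a \<zeta>))
               + M i - (SUP \<zeta>\<in>{\<zeta>. \<forall>j\<in>Vball i k. \<zeta> j = w j}. (\<Sum>b\<in>UNIV - {w i}. c i b \<zeta>)))
          ` (PiE (Vball i k) (\<lambda>_. UNIV)))"

definition alpha ::
  "(int ^ 'd \<Rightarrow> 'a::finite \<Rightarrow> (int ^ 'd \<Rightarrow> 'a) \<Rightarrow> real) \<Rightarrow> (int ^ 'd \<Rightarrow> real) \<Rightarrow> int ^ 'd \<Rightarrow> int \<Rightarrow> real" where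
  "alpha c M i k = (if k = -1 then alpha_neg1 c M i else alpha_pos c M i k)"

definition lam ::
  "(int ^ 'd \<Rightarrow> 'a::finite \<Rightarrow> (int ^ 'd \<Rightarrow> 'a) \<Rightarrow> real) \<Rightarrow> (int ^ 'd \<Rightarrow> real) \<Rightarrow> int ^ 'd \<Rightarrow> int \<Rightarrow> real" where
  "lam c M i k = (if k = -1 then alpha c M i (-1) / M i
                  else (alpha c M i k - alpha c M i (k - 1)) / M i)"

definition cylinder :: "((int ^ 'd \<Rightarrow> 'a) \<Rightarrow> real) \<Rightarrow> bool" where
  "cylinder f \<longleftrightarrow> (\<exists>S. finite S \<and> (\<forall>\<eta> \<zeta>. (\<forall>j\<in>S. \<eta> j = \<zeta> j) \<longrightarrow> f \<eta> = f \<zeta>))"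

definition generator ::
  "(int ^ 'd \<Rightarrow> 'a::finite \<Rightarrow> (int ^ 'd \<Rightarrow> 'a) \<Rightarrow> real) \<Rightarrow> ((int ^ 'd \<Rightarrow> 'a) \<Rightarrow> real) \<Rightarrow> (int ^ 'd \<Rightarrow> 'a) \<Rightarrow> real" where
  "generator c f \<eta> = (\<Sum>\<^sub>\<infinity>i. \<Sum>a\<in>UNIV - {\<eta> i}. c i a \<eta> * (f (\<eta>(i := a)) - f \<eta>))"

end

theory Submission
  imports Defs
begin

text \<open>
  The local distributions are produced by a greedy construction.  For a site \<open>i\<close>, a
  configuration \<open>\<eta>\<close> and a level \<open>n = k + 1\<close>, the lower rate \<open>lower_rate c i n \<eta> a\<close> is the infimum of
  \<open>c_i(a, \<zeta>)\<close> over configurations \<open>\<zeta>\<close> agreeing with \<open>\<eta>\<close> on \<open>V_i(k)\<close>.  It is increasing in \<open>n\<close>,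
  bounded by \<open>c_i(a, \<eta>)\<close>, has total mass at least \<open>\<alpha>_i(k)\<close>, and by continuity \<open>\<alpha>_i(k) \<rightarrow> M_i\<close>.
  Layer \<open>n\<close> spends the mass \<open>\<alpha>_i(k) - \<alpha>_i(k - 1) = M_i \<lambda>_i(k)\<close> proportionally to what the lower
  rate at level \<open>n\<close> still offers; the layers then add up exactly to \<open>c_i(\<cdot>, \<eta>)\<close>.
\<close>

definition residual_dist :: "('a::finite \<Rightarrow> real) \<Rightarrow> ('a \<Rightarrow> real) \<Rightarrow> 'a \<Rightarrow> real" where
  "residual_dist \<mu> \<rho> a =
     (if sum \<rho> UNIV < sum \<mu> UNIV then (\<mu> a - \<rho> a) / (sum \<mu> UNIV - sum \<rho> UNIV)
      else 1 / real CARD('a))"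

lemma residual_dist_nonneg:
  assumes "\<And>b. \<rho> b \<le> \<mu> b"
  shows "0 \<le> residual_dist \<mu> \<rho> a"
  using assms[of a] by (simp add: residual_dist_def)

lemma residual_dist_sum:
  fixes \<mu> \<rho> :: "'a::finite \<Rightarrow> real"
  shows "sum (residual_dist \<mu> \<rho>) UNIV = 1"
proof (cases "sum \<rho> UNIV < sum \<mu> UNIV")
  case True
  then have "sum (residual_dist \<mu> \<rho>) UNIV = (\<Sum>a\<in>UNIV. \<mu> a - \<rho> a) / (sum \<mu> UNIV - sum \<rho> UNIV)"
    by (simp add: residual_dist_def sum_divide_distrib)
  then show ?thesis using True by (simp add: sum_subtractf)
qed (simp add: residual_dist_def)

lemma residual_dist_le:
  assumes le: "\<And>b. \<rho> b \<le> \<mu> b" and t: "0 \<le> t" "t \<le> sum \<mu> UNIV - sum \<rho> UNIV"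
  shows "t * residual_dist \<mu> \<rho> a \<le> \<mu> a - \<rho> a"
proof (cases "sum \<rho> UNIV < sum \<mu> UNIV")
  case True
  have "t / (sum \<mu> UNIV - sum \<rho> UNIV) \<le> 1" using True t by simp
  from mult_left_mono[OF this, of "\<mu> a - \<rho> a"] show ?thesis
    using True le[of a] by (simp add: residual_dist_def mult.commute)
next
  case False
  then have "t = 0" using t by linarith
  then show ?thesis using le[of a] by simp
qed

text \<open>The greedy layer construction, for an increasing sequence \<open>m n\<close> of sub-measures on a
  finite set and thresholds \<open>\<beta> n \<le> \<Sum> m n\<close>.\<close>

definition prev_level :: "(nat \<Rightarrow> real) \<Rightarrow> nat \<Rightarrow> real" where
  "prev_level \<beta> n = (case n of 0 \<Rightarrow> 0 | Suc k \<Rightarrow> \<beta> k)"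

primrec greedy_mass :: "(nat \<Rightarrow> 'a::finite \<Rightarrow> real) \<Rightarrow> (nat \<Rightarrow> real) \<Rightarrow> nat \<Rightarrow> 'a \<Rightarrow> real" where
  "greedy_mass m \<beta> 0 = (\<lambda>a. 0)"
| "greedy_mass m \<beta> (Suc n) = (\<lambda>a. greedy_mass m \<beta> n a
      + (\<beta> n - prev_level \<beta> n) * residual_dist (m n) (greedy_mass m \<beta> n) a)"

definition layer_dist :: "(nat \<Rightarrow> 'a::finite \<Rightarrow> real) \<Rightarrow> (nat \<Rightarrow> real) \<Rightarrow> nat \<Rightarrow> 'a \<Rightarrow> real" where
  "layer_dist m \<beta> n = residual_dist (m n) (greedy_mass m \<beta> n)"

text \<open>Layer \<open>n\<close> depends only on \<open>m 0, \<dots>, m n\<close>; this is what makes the layers local.\<close>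

lemma greedy_mass_local:
  "(\<And>j. j < n \<Longrightarrow> m j = m' j) \<Longrightarrow> greedy_mass m \<beta> n = greedy_mass m' \<beta> n"
  by (induction n) auto

lemma layer_dist_local:
  assumes "\<And>j. j \<le> n \<Longrightarrow> m j = m' j"
  shows "layer_dist m \<beta> n = layer_dist m' \<beta> n"
  using assms greedy_mass_local[of n m m' \<beta>] by (simp add: layer_dist_def)

lemma layer_dist_sum: "sum (layer_dist m \<beta> n) UNIV = 1"
  by (simp add: layer_dist_def residual_dist_sum)

lemma greedy_mass_Suc [simp]:
  "greedy_mass m \<beta> (Suc n) a = greedy_mass m \<beta> n a + (\<beta> n - prev_level \<beta> n) * layer_dist m \<beta> n a"
  by (simp add: layer_dist_def)

declare greedy_mass.simps(2) [simp del]

locale greedy_layers =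
  fixes m :: "nat \<Rightarrow> 'a::finite \<Rightarrow> real" and \<beta> :: "nat \<Rightarrow> real"
  assumes m_nonneg: "\<And>a. 0 \<le> m 0 a"
    and m_mono: "\<And>n a. m n a \<le> m (Suc n) a"
    and \<beta>_nonneg: "0 \<le> \<beta> 0"
    and \<beta>_mono: "\<And>n. \<beta> n \<le> \<beta> (Suc n)"
    and \<beta>_le_mass: "\<And>n. \<beta> n \<le> sum (m n) UNIV"
begin

lemma weight_nonneg: "0 \<le> \<beta> n - prev_level \<beta> n"
  using \<beta>_nonneg \<beta>_mono by (cases n) (auto simp: prev_level_def)

lemma greedy_mass_invariant:
  "(\<forall>a. greedy_mass m \<beta> n a \<le> m n a) \<and> sum (greedy_mass m \<beta> n) UNIV = prev_level \<beta> n"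
proof (induction n)
  case 0
  show ?case by (simp add: m_nonneg prev_level_def)
next
  case (Suc n)
  then have le: "\<And>a. greedy_mass m \<beta> n a \<le> m n a"
    and mass: "sum (greedy_mass m \<beta> n) UNIV = prev_level \<beta> n" by blast+
  have step: "(\<beta> n - prev_level \<beta> n) * layer_dist m \<beta> n a \<le> m n a - greedy_mass m \<beta> n a" for a
    unfolding layer_dist_def
    by (rule residual_dist_le[OF le weight_nonneg]) (use \<beta>_le_mass[of n] mass in simp)
  have "greedy_mass m \<beta> (Suc n) a \<le> m n a" for a
    using step[of a] by simp
  then have "greedy_mass m \<beta> (Suc n) a \<le> m (Suc n) a" for a
    using m_mono[of n a] by (rule order_trans)
  moreover have "sum (greedy_mass m \<beta> (Suc n)) UNIV = \<beta> n"
    by (simp add: sum.distrib mass layer_dist_sum flip: sum_distrib_left)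
  ultimately show ?case by (simp add: prev_level_def)
qed

lemma layer_dist_nonneg: "0 \<le> layer_dist m \<beta> n a"
  unfolding layer_dist_def by (rule residual_dist_nonneg) (use greedy_mass_invariant in blast)

lemma greedy_mass_eq_partial_sum:
  "greedy_mass m \<beta> N a = (\<Sum>n<N. (\<beta> n - prev_level \<beta> n) * layer_dist m \<beta> n a)"
  by (induction N) simp_all

text \<open>Main property of the construction: if the \<open>m n\<close> stay below \<open>x\<close> and the thresholds
  tend to the total mass of \<open>x\<close>, the weighted layers add up to \<open>x\<close> exactly, since
  \<open>0 \<le> x a - greedy_mass (n + 1) a \<le> \<Sum>x - \<beta> n\<close>.\<close>

lemma layers_has_sum:
  assumes le_x: "\<And>n a. m n a \<le> x a" and lim: "\<beta> \<longlonglongrightarrow> sum x UNIV"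
  shows "((\<lambda>n. (\<beta> n - prev_level \<beta> n) * layer_dist m \<beta> n a) has_sum x a) UNIV"
proof -
  have below: "greedy_mass m \<beta> n b \<le> x b" for n b
    using greedy_mass_invariant[of n] le_x[of n b] by (blast intro: order_trans)
  have gap: "x a - greedy_mass m \<beta> (Suc n) a \<le> sum x UNIV - \<beta> n" for n
  proof -
    have "x a - greedy_mass m \<beta> (Suc n) a \<le> (\<Sum>b\<in>UNIV. x b - greedy_mass m \<beta> (Suc n) b)"
      by (rule member_le_sum) (simp_all add: below del: greedy_mass_Suc)
    also have "\<dots> = sum x UNIV - \<beta> n"
      using greedy_mass_invariant[of "Suc n"] by (simp add: sum_subtractf prev_level_def)
    finally show ?thesis .
  qed
  have lower: "x a - (sum x UNIV - \<beta> n) \<le> greedy_mass m \<beta> (Suc n) a" for n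
    using gap[of n] by linarith
  have "(\<lambda>n. x a - (sum x UNIV - \<beta> n)) \<longlonglongrightarrow> x a - (sum x UNIV - sum x UNIV)"
    by (intro tendsto_intros lim)
  then have lower_lim: "(\<lambda>n. x a - (sum x UNIV - \<beta> n)) \<longlonglongrightarrow> x a" by simp
  have "\<forall>\<^sub>F n in sequentially. x a - (sum x UNIV - \<beta> n) \<le> greedy_mass m \<beta> (Suc n) a"
    by (rule always_eventually) (use lower in blast)
  moreover have "\<forall>\<^sub>F n in sequentially. greedy_mass m \<beta> (Suc n) a \<le> x a"
    by (rule always_eventually) (use below in blast)
  ultimately have "(\<lambda>n. greedy_mass m \<beta> (Suc n) a) \<longlonglongrightarrow> x a"
    by (rule tendsto_sandwich[OF _ _ lower_lim tendsto_const])
  then have "(\<lambda>N. greedy_mass m \<beta> N a) \<longlonglongrightarrow> x a"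
    by (rule filterlim_sequentially_Suc[THEN iffD1])
  then have "(\<lambda>n. (\<beta> n - prev_level \<beta> n) * layer_dist m \<beta> n a) sums x a"
    by (simp add: sums_def greedy_mass_eq_partial_sum)
  then show ?thesis
    by (rule sums_nonneg_imp_has_sum) (intro mult_nonneg_nonneg weight_nonneg layer_dist_nonneg)
qed

end

lemma finite_Vball: "finite (Vball (i :: int ^ 'd) k)"
proof -
  have "Vball i k \<subseteq> (\<lambda>f. \<chi> u. f u) ` (PiE UNIV (\<lambda>u. {i$u - k .. i$u + k}))"
  proof
    fix j assume j: "j \<in> Vball i k"
    have "\<bar>(j - i)$u\<bar> \<le> k" for u
    proof -
      have "\<bar>(j - i)$u\<bar> \<le> (\<Sum>v\<in>UNIV. \<bar>(j - i)$v\<bar>)"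
        by (rule member_le_sum) auto
      then show ?thesis using j by (simp add: Vball_def norm1_def)
    qed
    then have "(\<lambda>u. j$u) \<in> PiE UNIV (\<lambda>u. {i$u - k .. i$u + k})"
      by (auto simp: abs_le_iff) (smt (verit))+
    then show "j \<in> (\<lambda>f. \<chi> u. f u) ` (PiE UNIV (\<lambda>u. {i$u - k .. i$u + k}))"
      by (metis (no_types) image_eqI vec_lambda_eta)
  qed
  then show ?thesis by (rule finite_subset) (auto intro!: finite_imageI finite_PiE)
qed

text \<open>Level \<open>n\<close> looks at the ball \<open>V_i(n - 1)\<close>, so level \<open>0\<close> sees nothing.\<close>

definition nbhd :: "int ^ 'd \<Rightarrow> nat \<Rightarrow> (int ^ 'd) set" where
  "nbhd i n = Vball i (int n - 1)"

definition agree :: "(int ^ 'd \<Rightarrow> 'a) \<Rightarrow> (int ^ 'd) set \<Rightarrow> (int ^ 'd \<Rightarrow> 'a) set" where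
  "agree \<eta> V = {\<zeta>. \<forall>j\<in>V. \<zeta> j = \<eta> j}"

lemma nbhd_0: "nbhd i 0 = {}"
proof -
  have "\<not> norm1 x \<le> -1" for x :: "int ^ 'd"
    using sum_nonneg[of UNIV "\<lambda>u. \<bar>x $ u\<bar>"] unfolding norm1_def by linarith
  then show ?thesis by (auto simp: nbhd_def Vball_def)
qed

lemma center_in_nbhd: "0 < n \<Longrightarrow> i \<in> nbhd i n"
  by (simp add: nbhd_def Vball_def norm1_def)

lemma nbhd_mono: "n \<le> n' \<Longrightarrow> nbhd i n \<subseteq> nbhd i n'"
  by (auto simp: nbhd_def Vball_def)

lemma finite_nbhd: "finite (nbhd i n)"
  by (simp add: nbhd_def finite_Vball)

definition lower_rate ::
  "(int ^ 'd \<Rightarrow> 'a \<Rightarrow> (int ^ 'd \<Rightarrow> 'a) \<Rightarrow> real) \<Rightarrow> int ^ 'd \<Rightarrow> nat \<Rightarrow> (int ^ 'd \<Rightarrow> 'a) \<Rightarrow> 'a \<Rightarrow> real"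
  where "lower_rate c i n \<eta> a = (INF \<zeta>\<in>agree \<eta> (nbhd i n). c i a \<zeta>)"

definition level ::
  "(int ^ 'd \<Rightarrow> 'a::finite \<Rightarrow> (int ^ 'd \<Rightarrow> 'a) \<Rightarrow> real) \<Rightarrow> (int ^ 'd \<Rightarrow> real) \<Rightarrow> int ^ 'd \<Rightarrow> nat \<Rightarrow> real"
  where "level c M i n = alpha c M i (int n - 1)"

lemma agree_self: "\<eta> \<in> agree \<eta> V"
  by (simp add: agree_def)

lemma lower_rate_local:
  assumes "\<forall>j\<in>nbhd i n. \<eta> j = \<eta>' j"
  shows "lower_rate c i n \<eta> = lower_rate c i n \<eta>'"
proof -
  have "agree \<eta> (nbhd i n) = agree \<eta>' (nbhd i n)" using assms by (auto simp: agree_def)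
  then show ?thesis by (simp add: lower_rate_def fun_eq_iff)
qed

lemma lam_level:
  "lam c M i (int n - 1) = (level c M i n - prev_level (level c M i) n) / M i"
  by (cases n) (simp_all add: lam_def level_def prev_level_def)

lemma pmf_embed_prob_vector:
  fixes p :: "'a::finite \<Rightarrow> real"
  assumes "\<And>b. 0 \<le> p b" "sum p UNIV = 1"
  shows "pmf (embed_pmf p) a = p a"
proof (rule pmf_embed_pmf)
  have "(\<integral>\<^sup>+ x. ennreal (p x) \<partial>count_space UNIV) = ennreal (sum p UNIV)"
    by (simp add: nn_integral_count_space_finite sum_ennreal assms(1))
  then show "(\<integral>\<^sup>+ x. ennreal (p x) \<partial>count_space UNIV) = 1" by (simp add: assms(2))
qed (rule assms(1))

lemma has_sum_from_minus_one:
  "(f has_sum s) {-1::int..} \<longleftrightarrow> ((\<lambda>n. f (int n - 1)) has_sum s) UNIV"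
  by (rule has_sum_reindex_bij_witness[where i="\<lambda>n. int n - 1" and j="\<lambda>k. nat (k + 1)"]) auto

text \<open>The local distributions \<open>p_i^{[k]}(\<cdot> | w)\<close>: the greedy layer \<open>k + 1\<close> built from the lower
  rates of \<open>w\<close>.\<close>

definition layer_pmf ::
  "(int ^ 'd \<Rightarrow> 'a::finite \<Rightarrow> (int ^ 'd \<Rightarrow> 'a) \<Rightarrow> real) \<Rightarrow> (int ^ 'd \<Rightarrow> real) \<Rightarrow> int ^ 'd \<Rightarrow> int
    \<Rightarrow> (int ^ 'd \<Rightarrow> 'a) \<Rightarrow> 'a pmf" where
  "layer_pmf c M i k w = embed_pmf (layer_dist (\<lambda>n. lower_rate c i n w) (level c M i) (nat (k + 1)))"

text \<open>The standing assumptions on the rates, except boundedness and summability, which the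
  decomposition does not need.\<close>

locale rate_system =
  fixes c :: "int ^ 'd \<Rightarrow> 'a::finite \<Rightarrow> (int ^ 'd \<Rightarrow> 'a) \<Rightarrow> real"
    and M :: "int ^ 'd \<Rightarrow> real"
  assumes pos: "\<And>i a \<eta>. a \<noteq> \<eta> i \<Longrightarrow> 0 < c i a \<eta>"
    and Mpos: "\<And>i. 0 < M i"
    and Mbound: "\<And>i \<eta>. (\<Sum>a\<in>UNIV - {\<eta> i}. c i a \<eta>) \<le> M i"
    and cdiag: "\<And>i \<eta>. c i (\<eta> i) \<eta> = M i - (\<Sum>a\<in>UNIV - {\<eta> i}. c i a \<eta>)"
    and cont: "\<And>a \<epsilon>. \<epsilon> > 0 \<Longrightarrow> \<exists>K::nat. \<forall>k\<ge>K. \<forall>i \<eta> \<zeta>.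
                  (\<forall>j\<in>Vball i (int k). \<eta> j = \<zeta> j) \<longrightarrow> \<bar>c i a \<eta> - c i a \<zeta>\<bar> \<le> \<epsilon>"
begin

lemma sum_rates: "(\<Sum>a\<in>UNIV. c i a \<eta>) = M i"
  by (simp add: sum.remove[of UNIV "\<eta> i"] cdiag)

lemma rate_nonneg: "0 \<le> c i a \<eta>"
  using pos[of a \<eta> i] cdiag[of i \<eta>] Mbound[of i \<eta>] by (cases "a = \<eta> i") auto

lemma bdd_below_rates: "bdd_below ((\<lambda>\<zeta>. c i a \<zeta>) ` S)"
  by (rule bdd_belowI2[where m=0]) (rule rate_nonneg)

text \<open>On configurations with \<open>\<zeta> i = a\<close> the rate of staying is \<open>M_i\<close> minus the total jump rate,
  so its infimum is \<open>M_i\<close> minus a supremum; this links \<open>lower_rate\<close> to the definition of \<open>\<alpha>\<close>.\<close>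

lemma INF_diag_rate:
  assumes "S \<noteq> {}" "\<And>\<zeta>. \<zeta> \<in> S \<Longrightarrow> \<zeta> i = a"
  shows "(INF \<zeta>\<in>S. c i a \<zeta>) = M i - (SUP \<zeta>\<in>S. \<Sum>b\<in>UNIV - {a}. c i b \<zeta>)"
proof -
  have bdd: "bdd_above ((\<lambda>\<zeta>. \<Sum>b\<in>UNIV - {a}. c i b \<zeta>) ` S)"
    by (rule bdd_aboveI2[where M="M i"]) (metis Mbound assms(2))
  have "(INF \<zeta>\<in>S. c i a \<zeta>) = (INF \<zeta>\<in>S. M i + - (\<Sum>b\<in>UNIV - {a}. c i b \<zeta>))"
    using assms(2) cdiag by (intro INF_cong) (metis diff_conv_add_uminus)+
  also have "\<dots> = M i + (INF \<zeta>\<in>S. - (\<Sum>b\<in>UNIV - {a}. c i b \<zeta>))"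
    by (rule Inf_add_eq) (simp_all add: bdd_below_uminus_image bdd assms(1))
  also have "\<dots> = M i + - (SUP \<zeta>\<in>S. \<Sum>b\<in>UNIV - {a}. c i b \<zeta>)"
    by (simp add: uminus_cSUP[OF bdd assms(1)])
  finally show ?thesis by simp
qed

lemma lower_rate_0: "lower_rate c i 0 \<eta> a =
    (let R = M i - (SUP \<zeta>\<in>{\<zeta>. \<zeta> i = a}. (\<Sum>b\<in>UNIV - {a}. c i b \<zeta>))
     in if (\<exists>\<zeta>. \<zeta> i \<noteq> a) then min (INF \<zeta>\<in>{\<zeta>. \<zeta> i \<noteq> a}. c i a \<zeta>) R else R)"
proof -
  have agree_all: "agree \<eta> (nbhd i 0) = {\<zeta>. \<zeta> i \<noteq> a} \<union> {\<zeta>. \<zeta> i = a}"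
    by (auto simp: agree_def nbhd_0)
  have "(\<lambda>_. a) \<in> {\<zeta>. \<zeta> i = a}" by simp
  then have R: "(INF \<zeta>\<in>{\<zeta>. \<zeta> i = a}. c i a \<zeta>) = M i - (SUP \<zeta>\<in>{\<zeta>. \<zeta> i = a}. (\<Sum>b\<in>UNIV - {a}. c i b \<zeta>))"
    by (intro INF_diag_rate) auto
  show ?thesis
  proof (cases "\<exists>\<zeta>. \<zeta> i \<noteq> a")
    case True
    then have "lower_rate c i 0 \<eta> a = min (INF \<zeta>\<in>{\<zeta>. \<zeta> i \<noteq> a}. c i a \<zeta>) (INF \<zeta>\<in>{\<zeta>. \<zeta> i = a}. c i a \<zeta>)"
      unfolding lower_rate_def agree_all inf_min[symmetric]
      by (intro cINF_union bdd_below_rates) (auto intro: exI[of _ "\<lambda>_. a"])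
    then show ?thesis using True R by (simp add: Let_def)
  next
    case False
    then show ?thesis using R agree_all by (simp add: lower_rate_def Let_def)
  qed
qed

lemma level_eq_Min:
  "level c M i n = Min ((\<lambda>w. \<Sum>a\<in>UNIV. lower_rate c i n w a) ` PiE (nbhd i n) (\<lambda>_. UNIV))"
proof (cases n)
  case 0
  then show ?thesis
    by (simp add: level_def alpha_def alpha_neg1_def lower_rate_0 nbhd_0 PiE_empty_domain)
next
  case (Suc k)
  have mass: "(\<Sum>a\<in>UNIV. lower_rate c i n w a)
      = (\<Sum>a\<in>UNIV - {w i}. (INF \<zeta>\<in>{\<zeta>. \<forall>j\<in>Vball i (int n - 1). \<zeta> j = w j}. c i a \<zeta>))
        + M i - (SUP \<zeta>\<in>{\<zeta>. \<forall>j\<in>Vball i (int n - 1). \<zeta> j = w j}. (\<Sum>b\<in>UNIV - {w i}. c i b \<zeta>))"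
    for w :: "int ^ 'd \<Rightarrow> 'a"
  proof -
    have set: "agree w (nbhd i n) = {\<zeta>. \<forall>j\<in>Vball i (int n - 1). \<zeta> j = w j}"
      by (simp add: agree_def nbhd_def)
    have "lower_rate c i n w (w i) = M i - (SUP \<zeta>\<in>agree w (nbhd i n). (\<Sum>b\<in>UNIV - {w i}. c i b \<zeta>))"
      unfolding lower_rate_def
      by (rule INF_diag_rate) (use agree_self center_in_nbhd Suc in \<open>auto simp: agree_def\<close>)
    then show ?thesis
      by (simp add: sum.remove[of UNIV "w i"] lower_rate_def set)
  qed
  have "level c M i n = alpha_pos c M i (int n - 1)"
    using Suc by (simp add: level_def alpha_def)
  then show ?thesis
    by (simp only: alpha_pos_def mass nbhd_def)
qed

lemma lower_rate_le: "lower_rate c i n \<eta> a \<le> c i a \<eta>"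
  unfolding lower_rate_def by (rule cINF_lower[OF bdd_below_rates agree_self])

lemma lower_rate_nonneg: "0 \<le> lower_rate c i n \<eta> a"
  unfolding lower_rate_def using agree_self by (blast intro: cINF_greatest rate_nonneg)

lemma lower_rate_mono: "lower_rate c i n \<eta> a \<le> lower_rate c i (Suc n) \<eta> a"
  unfolding lower_rate_def
proof (rule cINF_superset_mono[OF _ bdd_below_rates])
  show "agree \<eta> (nbhd i (Suc n)) \<noteq> {}" using agree_self by blast
  show "agree \<eta> (nbhd i (Suc n)) \<subseteq> agree \<eta> (nbhd i n)"
    using nbhd_mono[of n "Suc n" i] by (auto simp: agree_def)
qed simp

lemma level_le_mass: "level c M i n \<le> (\<Sum>a\<in>UNIV. lower_rate c i n \<eta> a)"
proof -
  have "(\<Sum>a\<in>UNIV. lower_rate c i n \<eta> a) = (\<Sum>a\<in>UNIV. lower_rate c i n (restrict \<eta> (nbhd i n)) a)"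
    by (simp add: lower_rate_local[of i n \<eta> "restrict \<eta> (nbhd i n)"])
  then show ?thesis unfolding level_eq_Min
    by (auto intro!: Min_le finite_imageI finite_PiE finite_nbhd)
qed

lemma level_greatest: "(\<And>\<eta>. x \<le> (\<Sum>a\<in>UNIV. lower_rate c i n \<eta> a)) \<Longrightarrow> x \<le> level c M i n"
  unfolding level_eq_Min
  by (simp add: finite_PiE finite_nbhd PiE_eq_empty_iff)

lemma level_nonneg: "0 \<le> level c M i n"
  by (rule level_greatest) (simp add: sum_nonneg lower_rate_nonneg)

lemma level_mono: "level c M i n \<le> level c M i (Suc n)"
proof (rule level_greatest)
  fix \<eta>
  have "(\<Sum>a\<in>UNIV. lower_rate c i n \<eta> a) \<le> (\<Sum>a\<in>UNIV. lower_rate c i (Suc n) \<eta> a)"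
    by (rule sum_mono) (rule lower_rate_mono)
  then show "level c M i n \<le> (\<Sum>a\<in>UNIV. lower_rate c i (Suc n) \<eta> a)"
    using level_le_mass[of i n \<eta>] by linarith
qed

lemma level_le_M: "level c M i n \<le> M i"
proof -
  have "(\<Sum>a\<in>UNIV. lower_rate c i n \<eta> a) \<le> (\<Sum>a\<in>UNIV. c i a \<eta>)" for \<eta>
    by (rule sum_mono) (rule lower_rate_le)
  then show ?thesis using level_le_mass[of i n] by (metis order_trans sum_rates)
qed

lemma lower_rate_uniform:
  assumes "0 < \<epsilon>"
  shows "\<exists>N. \<forall>n\<ge>N. \<forall>i \<eta> a. c i a \<eta> - \<epsilon> \<le> lower_rate c i n \<eta> a"
proof -
  obtain K :: "'a \<Rightarrow> nat" where K: "\<And>a k i \<eta> \<zeta>. K a \<le> k \<Longrightarrow> (\<forall>j\<in>Vball i (int k). \<eta> j = \<zeta> j)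
      \<Longrightarrow> \<bar>c i a \<eta> - c i a \<zeta>\<bar> \<le> \<epsilon>"
    using cont[OF assms] by metis
  have "c i a \<eta> - \<epsilon> \<le> lower_rate c i n \<eta> a" if n: "Suc (Max (range K)) \<le> n" for n i \<eta> a
    unfolding lower_rate_def
  proof (rule cINF_greatest)
    show "agree \<eta> (nbhd i n) \<noteq> {}" using agree_self by blast
    fix \<zeta> assume "\<zeta> \<in> agree \<eta> (nbhd i n)"
    then have agree: "\<forall>j\<in>Vball i (int (n - 1)). \<eta> j = \<zeta> j"
      using n by (auto simp: agree_def nbhd_def of_nat_diff)
    have "K a \<le> Max (range K)" by (simp add: Max_ge)
    then have "K a \<le> n - 1" using n by linarith
    then show "c i a \<eta> - \<epsilon> \<le> c i a \<zeta>" using K[OF _ agree] by fastforce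
  qed
  then show ?thesis by blast
qed

text \<open>Hence \<open>\<alpha>_i(k) \<rightarrow> M_i\<close>, i.e. the \<open>\<lambda>_i(k)\<close> form a probability distribution.\<close>

lemma level_tendsto: "level c M i \<longlonglongrightarrow> M i"
proof (rule LIMSEQ_I)
  fix r :: real assume "0 < r"
  define \<epsilon> where "\<epsilon> = r / (2 * real CARD('a))"
  have "0 < \<epsilon>" using \<open>0 < r\<close> by (simp add: \<epsilon>_def)
  then obtain N where N: "\<And>n i \<eta> a. N \<le> n \<Longrightarrow> c i a \<eta> - \<epsilon> \<le> lower_rate c i n \<eta> a"
    using lower_rate_uniform by blast
  have "norm (level c M i n - M i) < r" if "N \<le> n" for n
  proof -
    have "M i - r / 2 \<le> (\<Sum>a\<in>UNIV. lower_rate c i n \<eta> a)" for \<eta>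
    proof -
      have "(\<Sum>a\<in>UNIV. c i a \<eta> - \<epsilon>) \<le> (\<Sum>a\<in>UNIV. lower_rate c i n \<eta> a)"
        using N[OF that] by (intro sum_mono) blast
      moreover have "(\<Sum>a\<in>UNIV. c i a \<eta> - \<epsilon>) = M i - r / 2"
        by (simp add: sum_subtractf sum_rates \<epsilon>_def)
      ultimately show ?thesis by simp
    qed
    then have "M i - r / 2 \<le> level c M i n" by (rule level_greatest)
    then show ?thesis using level_le_M[of i n] \<open>0 < r\<close> by simp
  qed
  then show "\<exists>N. \<forall>n\<ge>N. norm (level c M i n - M i) < r" by blast
qed

text \<open>The decomposition \<open>c_i(a, \<eta>) / M_i = \<Sum>_k \<lambda>_i(k) p_i^{[k]}(a | \<eta>(V_i(k)))\<close>: apply the greedy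
  construction to the lower rates of \<open>\<eta>\<close>, which may be replaced by those of its restriction.\<close>

lemma layer_decomposition:
  "((\<lambda>k. lam c M i k * pmf (layer_pmf c M i k (restrict \<eta> (Vball i k))) a)
      has_sum (c i a \<eta> / M i)) {-1..}"
proof -
  let ?m = "\<lambda>n. lower_rate c i n \<eta>"
  interpret greedy_layers ?m "level c M i"
    by unfold_locales (simp_all add: lower_rate_nonneg lower_rate_mono level_nonneg level_mono level_le_mass)
  have "((\<lambda>n. (level c M i n - prev_level (level c M i) n) * layer_dist ?m (level c M i) n a)
      has_sum c i a \<eta>) UNIV"
    by (rule layers_has_sum) (simp_all add: lower_rate_le level_tendsto sum_rates)
  then have sum: "((\<lambda>n. (level c M i n - prev_level (level c M i) n) * layer_dist ?m (level c M i) n a / M i)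
      has_sum (c i a \<eta> / M i)) UNIV"
    by (rule has_sum_divide_const)
  have "lam c M i (int n - 1) * pmf (layer_pmf c M i (int n - 1) (restrict \<eta> (Vball i (int n - 1)))) a
      = (level c M i n - prev_level (level c M i) n) * layer_dist ?m (level c M i) n a / M i" for n
  proof -
    have "lower_rate c i j (restrict \<eta> (nbhd i n)) = ?m j" if "j \<le> n" for j
      using nbhd_mono[OF that] by (intro lower_rate_local) auto
    then have "layer_dist (\<lambda>j. lower_rate c i j (restrict \<eta> (nbhd i n))) (level c M i) n
        = layer_dist ?m (level c M i) n"
      by (rule layer_dist_local)
    then show ?thesis
      by (simp add: layer_pmf_def lam_level nbhd_def pmf_embed_prob_vector layer_dist_nonneg layer_dist_sum)
  qed
  with sum show ?thesis
    by (simp add: has_sum_from_minus_one)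
qed

end

text \<open>Any such decomposition of the rates rewrites the generator; the diagonal term vanishes since
  \<open>\<eta>(i := \<eta> i) = \<eta>\<close>.\<close>

lemma generator_expansion:
  fixes c :: "int ^ 'd \<Rightarrow> 'a::finite \<Rightarrow> (int ^ 'd \<Rightarrow> 'a) \<Rightarrow> real"
  assumes Mpos: "\<And>i. 0 < M i"
    and decomp: "\<And>i a. ((\<lambda>k. w i k * p i k a) has_sum (c i a \<eta> / M i)) K"
  shows "generator c f \<eta> =
    (\<Sum>\<^sub>\<infinity>i. \<Sum>a\<in>UNIV. \<Sum>\<^sub>\<infinity>k\<in>K. M i * w i k * p i k a * (f (\<eta>(i := a)) - f \<eta>))"
  unfolding generator_def
proof (rule infsum_cong)
  fix i
  let ?D = "\<lambda>a. f (\<eta>(i := a)) - f \<eta>"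
  have "(\<Sum>\<^sub>\<infinity>k\<in>K. M i * w i k * p i k a * ?D a) = c i a \<eta> * ?D a" for a
  proof (rule infsumI)
    have "((\<lambda>k. (M i * ?D a) * (w i k * p i k a)) has_sum ((M i * ?D a) * (c i a \<eta> / M i))) K"
      by (rule has_sum_cmult_right[OF decomp])
    then show "((\<lambda>k. M i * w i k * p i k a * ?D a) has_sum (c i a \<eta> * ?D a)) K"
      using Mpos[of i] by (simp add: ac_simps)
  qed
  moreover have "(\<Sum>a\<in>UNIV. c i a \<eta> * ?D a) = (\<Sum>a\<in>UNIV - {\<eta> i}. c i a \<eta> * ?D a)"
    by (simp add: sum.remove[of UNIV "\<eta> i"])
  ultimately show "(\<Sum>a\<in>UNIV - {\<eta> i}. c i a \<eta> * ?D a)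
      = (\<Sum>a\<in>UNIV. \<Sum>\<^sub>\<infinity>k\<in>K. M i * w i k * p i k a * ?D a)"
    by simp
qed

theorem theorem1:
  fixes c :: "int ^ 'd \<Rightarrow> 'a::finite \<Rightarrow> (int ^ 'd \<Rightarrow> 'a) \<Rightarrow> real"
    and M \<Gamma> :: "int ^ 'd \<Rightarrow> real"
  assumes pos: "\<And>i a \<eta>. a \<noteq> \<eta> i \<Longrightarrow> 0 < c i a \<eta>"
    and bdd: "\<And>i a \<eta>. a \<noteq> \<eta> i \<Longrightarrow> c i a \<eta> \<le> \<Gamma> i"
    and Mpos: "\<And>i. 0 < M i"
    and Mbound: "\<And>i \<eta>. (\<Sum>a\<in>UNIV - {\<eta> i}. c i a \<eta>) \<le> M i"
    and cdiag: "\<And>i \<eta>. c i (\<eta> i) \<eta> = M i - (\<Sum>a\<in>UNIV - {\<eta> i}. c i a \<eta>)"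
    and cont: "\<And>a \<epsilon>. \<epsilon> > 0 \<Longrightarrow> \<exists>K::nat. \<forall>k\<ge>K. \<forall>i \<eta> \<zeta>.
                  (\<forall>j\<in>Vball i (int k). \<eta> j = \<zeta> j) \<longrightarrow> \<bar>c i a \<eta> - c i a \<zeta>\<bar> \<le> \<epsilon>"
    and summ: "\<exists>B::real. \<forall>i.
                  (\<lambda>k. real (card (Vball i k)) * lam c M i k) summable_on {0..}
                \<and> (\<Sum>\<^sub>\<infinity>k\<in>{0..}. real (card (Vball i k)) * lam c M i k) \<le> B"
  shows "\<exists>P :: int ^ 'd \<Rightarrow> int \<Rightarrow> (int ^ 'd \<Rightarrow> 'a) \<Rightarrow> 'a pmf.
           (\<forall>i a \<eta>. c i a \<eta> = M i * (c i a \<eta> / M i)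
              \<and> ((\<lambda>k. lam c M i k * pmf (P i k (restrict \<eta> (Vball i k))) a)
                    has_sum (c i a \<eta> / M i)) {-1..})
         \<and> (\<forall>f \<eta>. cylinder f \<longrightarrow>
              generator c f \<eta> =
                (\<Sum>\<^sub>\<infinity>i. \<Sum>a\<in>UNIV. \<Sum>\<^sub>\<infinity>k\<in>{-1..}.
                   M i * lam c M i k * pmf (P i k (restrict \<eta> (Vball i k))) a
                     * (f (\<eta>(i := a)) - f \<eta>)))"
proof -
  interpret rate_system c M
    by (rule rate_system.intro) (fact pos Mpos Mbound cdiag cont)+
  have decomp: "((\<lambda>k. lam c M i k * pmf (layer_pmf c M i k (restrict \<eta> (Vball i k))) a)
      has_sum (c i a \<eta> / M i)) {-1..}" for i a \<eta>
    by (rule layer_decomposition)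
  have "c i a \<eta> = M i * (c i a \<eta> / M i)" for i a \<eta>
    using Mpos[of i] by simp
  moreover have "generator c f \<eta> =
      (\<Sum>\<^sub>\<infinity>i. \<Sum>a\<in>UNIV. \<Sum>\<^sub>\<infinity>k\<in>{-1..}.
         M i * lam c M i k * pmf (layer_pmf c M i k (restrict \<eta> (Vball i k))) a
           * (f (\<eta>(i := a)) - f \<eta>))" for f \<eta>
    by (rule generator_expansion[OF Mpos decomp])
  ultimately show ?thesis
    using decomp by blast
qed

end
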